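(* Assume successive states are independent and identically distributed according to $m$. For every $\delta\in(0,1)$, the set $NE^b_\delta$ of Nash equilibrium payoffs of the $\delta$-discounted blind game is a subset of the set $NE_\delta$ of Nash equilibrium payoffs of the $\delta$-discounted (non-blind) game.
   Context: The (non-blind) game: finite sets $S$ (states), $A=S$ (messages), $B$ (receiver actions); payoff $u=(u^1,u^2):S\times B\to\mathbb{R}^2$ (player 1 = sender, player 2 = receiver); states $s_1,s_2,\dots$ in $S$. At each stage $n$ the sender observes $s_n$ and announces $a_n\in A$; the receiver observes $a_n$ and chooses $b_n\in B$; $b_n$ is publicly disclosed; payoffs are not observed. Sender strategies are maps $\sigma:\bigcup_{n\ge0}(S\times A\times B)^n\times S\to\Delta(A)$, receiver strategies maps $\tau:\bigcup_{n\ge0}(A\times B)^n\to\Delta(B)$, and payoffs are $\mathbf{E}_{\sigma,\tau}[\sum_{n\ge1}(1-\delta)\delta^{n-1}u(s_n,b_n)]$. The blind game is identical except that the sender does not observe the receiver's actions: sender strategies are maps $\sigma:\bigcup_{n\ge0}(S\times A)^n\times S\to\Delta(A)$. *)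

theory Defs
  imports "HOL-Probability.Probability"
begin

text \<open>Sender-receiver game. States and messages have type 's (A = S),
receiver actions have type 'b. A full history of n stages is the list
[(s_1,a_1,b_1), ..., (s_n,a_n,b_n)].\<close>

type_synonym ('s,'b) sender = "('s \<times> 's \<times> 'b) list \<Rightarrow> 's \<Rightarrow> 's pmf"
type_synonym 's blind_sender = "('s \<times> 's) list \<Rightarrow> 's \<Rightarrow> 's pmf"
type_synonym ('s,'b) receiver = "('s \<times> 'b) list \<Rightarrow> 's \<Rightarrow> 'b pmf"

definition recv_view :: "('s \<times> 's \<times> 'b) list \<Rightarrow> ('s \<times> 'b) list" where
  "recv_view h = map (\<lambda>(s,a,b). (a,b)) h"

definition blind_view :: "('s \<times> 's \<times> 'b) list \<Rightarrow> ('s \<times> 's) list" where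
  "blind_view h = map (\<lambda>(s,a,b). (s,a)) h"

primrec hist :: "'s pmf \<Rightarrow> ('s,'b) sender \<Rightarrow> ('s,'b) receiver \<Rightarrow> nat \<Rightarrow> ('s \<times> 's \<times> 'b) list pmf" where
  "hist m \<sigma> \<tau> 0 = return_pmf []"
| "hist m \<sigma> \<tau> (Suc n) =
     bind_pmf (hist m \<sigma> \<tau> n) (\<lambda>h. bind_pmf m (\<lambda>s. bind_pmf (\<sigma> h s) (\<lambda>a.
        map_pmf (\<lambda>b. h @ [(s,a,b)]) (\<tau> (recv_view h) a))))"

text \<open>Discounted payoff E[sum_{n>=1} (1-delta) delta^(n-1) f(s_n,b_n)],
  written as the sum of the stage expectations (payoffs are bounded).\<close>
definition disc_payoff :: "'s pmf \<Rightarrow> ('s,'b) sender \<Rightarrow> ('s,'b) receiver \<Rightarrow> real \<Rightarrow> ('s \<Rightarrow> 'b \<Rightarrow> real) \<Rightarrow> real" where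
  "disc_payoff m \<sigma> \<tau> \<delta> f =
     (\<Sum>n. (1 - \<delta>) * \<delta> ^ n *
        measure_pmf.expectation (hist m \<sigma> \<tau> (Suc n)) (\<lambda>h. case last h of (s,a,b) \<Rightarrow> f s b))"

definition lift_blind :: "'s blind_sender \<Rightarrow> ('s,'b) sender" where
  "lift_blind \<sigma> h s = \<sigma> (blind_view h) s"

definition is_NE :: "'s pmf \<Rightarrow> ('s \<Rightarrow> 'b \<Rightarrow> real) \<Rightarrow> ('s \<Rightarrow> 'b \<Rightarrow> real) \<Rightarrow> real
     \<Rightarrow> ('s,'b) sender \<Rightarrow> ('s,'b) receiver \<Rightarrow> bool" where
  "is_NE m u1 u2 \<delta> \<sigma> \<tau> \<longleftrightarrow>
     (\<forall>\<sigma>'. disc_payoff m \<sigma>' \<tau> \<delta> u1 \<le> disc_payoff m \<sigma> \<tau> \<delta> u1) \<and>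
     (\<forall>\<tau>'. disc_payoff m \<sigma> \<tau>' \<delta> u2 \<le> disc_payoff m \<sigma> \<tau> \<delta> u2)"

definition NE_payoffs :: "'s pmf \<Rightarrow> ('s \<Rightarrow> 'b \<Rightarrow> real) \<Rightarrow> ('s \<Rightarrow> 'b \<Rightarrow> real) \<Rightarrow> real \<Rightarrow> (real \<times> real) set" where
  "NE_payoffs m u1 u2 \<delta> =
     {(disc_payoff m \<sigma> \<tau> \<delta> u1, disc_payoff m \<sigma> \<tau> \<delta> u2) | \<sigma> \<tau>. is_NE m u1 u2 \<delta> \<sigma> \<tau>}"

definition is_NE_blind :: "'s pmf \<Rightarrow> ('s \<Rightarrow> 'b \<Rightarrow> real) \<Rightarrow> ('s \<Rightarrow> 'b \<Rightarrow> real) \<Rightarrow> real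
     \<Rightarrow> 's blind_sender \<Rightarrow> ('s,'b) receiver \<Rightarrow> bool" where
  "is_NE_blind m u1 u2 \<delta> \<sigma> \<tau> \<longleftrightarrow>
     (\<forall>\<sigma>'. disc_payoff m (lift_blind \<sigma>') \<tau> \<delta> u1 \<le> disc_payoff m (lift_blind \<sigma>) \<tau> \<delta> u1) \<and>
     (\<forall>\<tau>'. disc_payoff m (lift_blind \<sigma>) \<tau>' \<delta> u2 \<le> disc_payoff m (lift_blind \<sigma>) \<tau> \<delta> u2)"

definition NE_blind_payoffs :: "'s pmf \<Rightarrow> ('s \<Rightarrow> 'b \<Rightarrow> real) \<Rightarrow> ('s \<Rightarrow> 'b \<Rightarrow> real) \<Rightarrow> real \<Rightarrow> (real \<times> real) set" where
  "NE_blind_payoffs m u1 u2 \<delta> =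
     {(disc_payoff m (lift_blind \<sigma>) \<tau> \<delta> u1, disc_payoff m (lift_blind \<sigma>) \<tau> \<delta> u2) | \<sigma> \<tau>.
        is_NE_blind m u1 u2 \<delta> \<sigma> \<tau>}"

end

theory Submission
  imports Defs
begin

text \<open>Let (\<sigma>, \<tau>) be an equilibrium of the blind game. Replace \<tau> by the receiver that
forgets its own past actions and resamples them by replaying \<tau> against the messages seen
so far. Against a blind sender this changes neither the law of the stage outcomes
(s_n, b_n) nor, therefore, any payoff, so receiver deviations stay unprofitable. The replayed
receiver looks only at messages, so its actions carry no information for the sender:
any sender strategy has the same stage outcomes as the blind strategy that plays, after
each blind history, the conditional average of its moves (Kuhn's theorem). Hence sender
deviations are no more profitable than in the blind game.\<close>

lemma bind_map_cond_pmf: "bind_pmf (map_pmf f q) (\<lambda>y. cond_pmf q {x. f x = y}) = q"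
  by (rule bind_cond_pmf_cancel) (auto simp: measure_pmf_single[symmetric] measure_map_pmf vimage_def)

lemma blind_view_snoc [simp]: "blind_view (h @ [(s,a,b)]) = blind_view h @ [(s,a)]"
  by (simp add: blind_view_def)

lemma recv_view_snoc [simp]: "recv_view (h @ [(s,a,b)]) = recv_view h @ [(a,b)]"
  by (simp add: recv_view_def)

lemma length_blind_view [simp]: "length (blind_view h) = length h"
  by (simp add: blind_view_def)

lemma map_fst_recv_view: "map fst (recv_view h) = map snd (blind_view h)"
  by (induction h) (auto simp: recv_view_def blind_view_def)

lemma length_hist: "h \<in> set_pmf (hist m \<sigma> \<tau> n) \<Longrightarrow> length h = n"
  by (induction n arbitrary: h) auto

definition outcome :: "('s \<times> 's \<times> 'b) list \<Rightarrow> 's \<times> 'b" where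
  "outcome h = (case last h of (s,a,b) \<Rightarrow> (s,b))"

lemma outcome_snoc [simp]: "outcome (h @ [(s,a,b)]) = (s,b)"
  by (simp add: outcome_def)

lemma expectation_stage_outcome:
  fixes f :: "'s \<Rightarrow> 'b \<Rightarrow> real"
  shows "measure_pmf.expectation p (\<lambda>h. case last h of (s,a,b) \<Rightarrow> f s b)
     = measure_pmf.expectation (map_pmf outcome p) (\<lambda>(s,b). f s b)"
  by (subst integral_map_pmf, rule arg_cong[where f = "measure_pmf.expectation p"])
    (auto simp: outcome_def split: prod.split)

lemma disc_payoff_outcome_cong:
  assumes "\<And>n. map_pmf outcome (hist m \<sigma> \<tau> (Suc n)) = map_pmf outcome (hist m \<sigma>' \<tau>' (Suc n))"
  shows "disc_payoff m \<sigma> \<tau> \<delta> f = disc_payoff m \<sigma>' \<tau>' \<delta> f"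
  unfolding disc_payoff_def expectation_stage_outcome assms ..

text \<open>Off the support of the blind views the value (here a point mass) is irrelevant.\<close>

definition blind_average :: "'s pmf \<Rightarrow> ('s,'b) sender \<Rightarrow> ('s,'b) receiver \<Rightarrow> 's blind_sender" where
  "blind_average m \<sigma> \<rho> g s = (let p = hist m \<sigma> \<rho> (length g) in
     if set_pmf p \<inter> {h. blind_view h = g} \<noteq> {}
     then bind_pmf (cond_pmf p {h. blind_view h = g}) (\<lambda>h. \<sigma> h s)
     else return_pmf s)"

lemma hist_step_blind_average:
  assumes blind: "map_pmf blind_view (hist m \<sigma> \<rho> n)
    = map_pmf blind_view (hist m (lift_blind (blind_average m \<sigma> \<rho>)) \<rho> n)"
  shows "bind_pmf (hist m \<sigma> \<rho> n) (\<lambda>h. bind_pmf m (\<lambda>s. bind_pmf (\<sigma> h s) (G (blind_view h) s)))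
    = bind_pmf (hist m (lift_blind (blind_average m \<sigma> \<rho>)) \<rho> n)
        (\<lambda>h. bind_pmf m (\<lambda>s. bind_pmf (blind_average m \<sigma> \<rho> (blind_view h) s) (G (blind_view h) s)))"
proof -
  let ?H = "hist m \<sigma> \<rho> n"
  let ?C = "\<lambda>g. cond_pmf ?H {h. blind_view h = g}"
  let ?K = "\<lambda>h. bind_pmf m (\<lambda>s. bind_pmf (\<sigma> h s) (G (blind_view h) s))"
  let ?K' = "\<lambda>g. bind_pmf m (\<lambda>s. bind_pmf (blind_average m \<sigma> \<rho> g s) (G g s))"
  have cond: "bind_pmf (?C g) ?K = ?K' g" if g: "g \<in> set_pmf (map_pmf blind_view ?H)" for g
  proof -
    obtain h0 where h0: "h0 \<in> set_pmf ?H" "g = blind_view h0"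
      using g by auto
    then have ne: "set_pmf ?H \<inter> {h. blind_view h = g} \<noteq> {}" and len: "length g = n"
      using length_hist by auto
    have "bind_pmf (?C g) ?K = bind_pmf (?C g) (\<lambda>h. bind_pmf m (\<lambda>s. bind_pmf (\<sigma> h s) (G g s)))"
      by (rule bind_pmf_cong) (use ne in auto)
    also have "\<dots> = bind_pmf m (\<lambda>s. bind_pmf (bind_pmf (?C g) (\<lambda>h. \<sigma> h s)) (G g s))"
      by (simp add: bind_assoc_pmf bind_commute_pmf[of "?C g" m])
    also have "\<dots> = ?K' g"
      using ne len by (simp add: blind_average_def Let_def)
    finally show ?thesis .
  qed
  have "bind_pmf ?H ?K = bind_pmf (map_pmf blind_view ?H) (\<lambda>g. bind_pmf (?C g) ?K)"
    by (subst (1) bind_map_cond_pmf[of blind_view ?H, symmetric]) (simp add: bind_assoc_pmf)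
  also have "\<dots> = bind_pmf (map_pmf blind_view ?H) ?K'"
    by (rule bind_pmf_cong[OF refl cond])
  also have "\<dots> = bind_pmf (map_pmf blind_view (hist m (lift_blind (blind_average m \<sigma> \<rho>)) \<rho> n)) ?K'"
    by (simp only: blind)
  finally show ?thesis
    by (simp add: bind_map_pmf)
qed

lemma blind_view_hist_blind_average:
  "map_pmf blind_view (hist m \<sigma> \<rho> n)
     = map_pmf blind_view (hist m (lift_blind (blind_average m \<sigma> \<rho>)) \<rho> n)"
proof (induction n)
  case 0
  then show ?case by simp
next
  case (Suc n)
  let ?G = "\<lambda>g s a. return_pmf (g @ [(s,a)])"
  have "map_pmf blind_view (hist m \<sigma> \<rho> (Suc n))
      = bind_pmf (hist m \<sigma> \<rho> n) (\<lambda>h. bind_pmf m (\<lambda>s. bind_pmf (\<sigma> h s) (?G (blind_view h) s)))"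
    by (simp add: map_bind_pmf map_pmf_comp)
  also have "\<dots> = bind_pmf (hist m (lift_blind (blind_average m \<sigma> \<rho>)) \<rho> n)
      (\<lambda>h. bind_pmf m (\<lambda>s. bind_pmf (blind_average m \<sigma> \<rho> (blind_view h) s) (?G (blind_view h) s)))"
    by (rule hist_step_blind_average[OF Suc])
  also have "\<dots> = map_pmf blind_view (hist m (lift_blind (blind_average m \<sigma> \<rho>)) \<rho> (Suc n))"
    by (simp add: map_bind_pmf map_pmf_comp lift_blind_def)
  finally show ?case .
qed

lemma outcome_hist_blind_average:
  assumes message_only: "\<And>ab a. \<rho> ab a = R (map fst ab) a"
  shows "map_pmf outcome (hist m \<sigma> \<rho> (Suc n))
    = map_pmf outcome (hist m (lift_blind (blind_average m \<sigma> \<rho>)) \<rho> (Suc n))"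
proof -
  let ?G = "\<lambda>g s a. map_pmf (\<lambda>b. (s,b)) (R (map snd g) a)"
  have "map_pmf outcome (hist m \<sigma> \<rho> (Suc n))
      = bind_pmf (hist m \<sigma> \<rho> n) (\<lambda>h. bind_pmf m (\<lambda>s. bind_pmf (\<sigma> h s) (?G (blind_view h) s)))"
    by (simp add: map_bind_pmf map_pmf_comp message_only map_fst_recv_view)
  also have "\<dots> = bind_pmf (hist m (lift_blind (blind_average m \<sigma> \<rho>)) \<rho> n)
      (\<lambda>h. bind_pmf m (\<lambda>s. bind_pmf (blind_average m \<sigma> \<rho> (blind_view h) s) (?G (blind_view h) s)))"
    by (rule hist_step_blind_average[OF blind_view_hist_blind_average])
  also have "\<dots> = map_pmf outcome (hist m (lift_blind (blind_average m \<sigma> \<rho>)) \<rho> (Suc n))"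
    by (simp add: map_bind_pmf map_pmf_comp message_only map_fst_recv_view lift_blind_def)
  finally show ?thesis .
qed

text \<open>Against a blind sender the receiver faces a fixed message sequence as;
  recv_actions \<tau> as n is the law of its first n actions.\<close>

primrec recv_actions :: "('s,'b) receiver \<Rightarrow> 's list \<Rightarrow> nat \<Rightarrow> 'b list pmf" where
  "recv_actions \<tau> as 0 = return_pmf []"
| "recv_actions \<tau> as (Suc n) = bind_pmf (recv_actions \<tau> as n)
     (\<lambda>bl. map_pmf (\<lambda>b. bl @ [b]) (\<tau> (zip (take n as) bl) (as ! n)))"

primrec blind_hist :: "'s pmf \<Rightarrow> 's blind_sender \<Rightarrow> nat \<Rightarrow> ('s \<times> 's) list pmf" where
  "blind_hist m \<sigma> 0 = return_pmf []"
| "blind_hist m \<sigma> (Suc n) = bind_pmf (blind_hist m \<sigma> n)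
     (\<lambda>g. bind_pmf m (\<lambda>s. map_pmf (\<lambda>a. g @ [(s,a)]) (\<sigma> g s)))"

definition merge_hist :: "('s \<times> 's) list \<Rightarrow> 'b list \<Rightarrow> ('s \<times> 's \<times> 'b) list" where
  "merge_hist g bl = map (\<lambda>((s,a),b). (s,a,b)) (zip g bl)"

definition replay :: "('s,'b) receiver \<Rightarrow> ('s,'b) receiver" where
  "replay \<tau> ab a = map_pmf last (recv_actions \<tau> (map fst ab @ [a]) (Suc (length ab)))"

lemma length_recv_actions: "bl \<in> set_pmf (recv_actions \<tau> as n) \<Longrightarrow> length bl = n"
  by (induction n arbitrary: bl) auto

lemma length_blind_hist: "g \<in> set_pmf (blind_hist m \<sigma> n) \<Longrightarrow> length g = n"
  by (induction n arbitrary: g) auto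

lemma recv_actions_take: "recv_actions \<tau> as n = recv_actions \<tau> (take n as) n"
proof (induction n arbitrary: as)
  case 0
  then show ?case by simp
next
  case (Suc n)
  have "recv_actions \<tau> (take (Suc n) as) n = recv_actions \<tau> as n"
    using Suc.IH[of "take (Suc n) as"] Suc.IH[of as] by (simp add: min_def)
  then show ?case
    by (cases "n < length as") (auto simp: min_def)
qed

lemma recv_actions_snoc:
  "length as = n \<Longrightarrow> recv_actions \<tau> (as @ [a]) (Suc n)
     = bind_pmf (recv_actions \<tau> as n) (\<lambda>bl. map_pmf (\<lambda>b. bl @ [b]) (\<tau> (zip as bl) a))"
  using recv_actions_take[of \<tau> "as @ [a]" n] by (simp add: nth_append)

lemma merge_hist_views:
  assumes "length g = length bl"
  shows blind_view_merge_hist: "blind_view (merge_hist g bl) = g"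
    and recv_view_merge_hist: "recv_view (merge_hist g bl) = zip (map snd g) bl"
    and merge_hist_snoc: "merge_hist (g @ [(s,a)]) (bl @ [b]) = merge_hist g bl @ [(s,a,b)]"
  using assms
  by (induction g bl rule: list_induct2) (auto simp: merge_hist_def blind_view_def recv_view_def)

lemma outcome_merge_hist:
  assumes "length g = length bl" "g \<noteq> []"
  shows "outcome (merge_hist g bl) = (fst (last g), last bl)"
proof -
  obtain g' x where g: "g = g' @ [x]"
    using assms(2) by (metis rev_exhaust)
  moreover obtain bl' b where "bl = bl' @ [b]"
    using assms by (metis length_0_conv rev_exhaust)
  moreover have "length g' = length bl'"
    using assms calculation by simp
  ultimately show ?thesis
    by (cases x) (simp add: merge_hist_snoc)
qed

lemma hist_lift_blind:
  "hist m (lift_blind \<sigma>) \<tau> n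
     = bind_pmf (blind_hist m \<sigma> n) (\<lambda>g. map_pmf (merge_hist g) (recv_actions \<tau> (map snd g) n))"
proof (induction n)
  case 0
  then show ?case by (simp add: merge_hist_def)
next
  case (Suc n)
  let ?B = "\<lambda>g. recv_actions \<tau> (map snd g) n"
  have "hist m (lift_blind \<sigma>) \<tau> (Suc n) = bind_pmf (blind_hist m \<sigma> n) (\<lambda>g. bind_pmf (?B g) (\<lambda>bl.
      bind_pmf m (\<lambda>s. bind_pmf (\<sigma> (blind_view (merge_hist g bl)) s) (\<lambda>a.
        map_pmf (\<lambda>b. merge_hist g bl @ [(s,a,b)]) (\<tau> (recv_view (merge_hist g bl)) a)))))"
    by (simp add: Suc bind_assoc_pmf bind_map_pmf lift_blind_def)
  also have "\<dots> = bind_pmf (blind_hist m \<sigma> n) (\<lambda>g. bind_pmf (?B g) (\<lambda>bl.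
      bind_pmf m (\<lambda>s. bind_pmf (\<sigma> g s) (\<lambda>a.
        map_pmf (\<lambda>b. merge_hist (g @ [(s,a)]) (bl @ [b])) (\<tau> (zip (map snd g) bl) a)))))"
    by (intro bind_pmf_cong refl)
      (auto simp: merge_hist_views length_blind_hist length_recv_actions)
  also have "\<dots> = bind_pmf (blind_hist m \<sigma> n) (\<lambda>g. bind_pmf m (\<lambda>s. bind_pmf (\<sigma> g s) (\<lambda>a.
      bind_pmf (?B g) (\<lambda>bl.
        map_pmf (\<lambda>b. merge_hist (g @ [(s,a)]) (bl @ [b])) (\<tau> (zip (map snd g) bl) a)))))"
    by (intro bind_pmf_cong refl)
      (simp add: bind_commute_pmf[of "?B _" m] bind_commute_pmf[of "?B _" "\<sigma> _ _"])
  also have "\<dots> = bind_pmf (blind_hist m \<sigma> n) (\<lambda>g. bind_pmf m (\<lambda>s. bind_pmf (\<sigma> g s) (\<lambda>a.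
      map_pmf (merge_hist (g @ [(s,a)])) (recv_actions \<tau> (map snd g @ [a]) (Suc n)))))"
    by (intro bind_pmf_cong refl)
      (simp add: length_blind_hist recv_actions_snoc map_bind_pmf map_pmf_comp del: recv_actions.simps(2))
  also have "\<dots> = bind_pmf (blind_hist m \<sigma> (Suc n))
      (\<lambda>g. map_pmf (merge_hist g) (recv_actions \<tau> (map snd g) (Suc n)))"
    by (simp add: bind_assoc_pmf bind_map_pmf)
  finally show ?case .
qed

lemma outcome_hist_lift_blind:
  "map_pmf outcome (hist m (lift_blind \<sigma>) \<tau> (Suc n)) = bind_pmf (blind_hist m \<sigma> (Suc n))
     (\<lambda>g. map_pmf (Pair (fst (last g))) (map_pmf last (recv_actions \<tau> (map snd g) (Suc n))))"
  unfolding hist_lift_blind map_bind_pmf map_pmf_comp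
proof (intro bind_pmf_cong map_pmf_cong refl)
  fix g bl
  assume "g \<in> set_pmf (blind_hist m \<sigma> (Suc n))" "bl \<in> set_pmf (recv_actions \<tau> (map snd g) (Suc n))"
  then have "length g = Suc n" "length bl = Suc n"
    by (auto dest: length_blind_hist length_recv_actions)
  then show "outcome (merge_hist g bl) = (fst (last g), last bl)"
    by (intro outcome_merge_hist) auto
qed

lemma last_recv_actions_replay:
  assumes "length as = Suc n"
  shows "map_pmf last (recv_actions (replay \<tau>) as (Suc n)) = map_pmf last (recv_actions \<tau> as (Suc n))"
proof -
  have as: "take n as @ [as ! n] = as"
    using assms by (metis lessI take_Suc_conv_app_nth take_all order_refl)
  have "map_pmf last (recv_actions (replay \<tau>) as (Suc n))
      = bind_pmf (recv_actions (replay \<tau>) as n) (\<lambda>bl. replay \<tau> (zip (take n as) bl) (as ! n))"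
    by (simp add: map_bind_pmf map_pmf_comp)
  also have "\<dots> = bind_pmf (recv_actions (replay \<tau>) as n) (\<lambda>_. map_pmf last (recv_actions \<tau> as (Suc n)))"
  proof (rule bind_pmf_cong[OF refl])
    fix bl
    assume "bl \<in> set_pmf (recv_actions (replay \<tau>) as n)"
    then have "length bl = n"
      by (rule length_recv_actions)
    then have "map fst (zip (take n as) bl) = take n as" "length (zip (take n as) bl) = n"
      using assms by auto
    then show "replay \<tau> (zip (take n as) bl) (as ! n) = map_pmf last (recv_actions \<tau> as (Suc n))"
      unfolding replay_def using as by simp
  qed
  finally show ?thesis
    by simp
qed

lemma outcome_hist_replay:
  "map_pmf outcome (hist m (lift_blind \<sigma>) (replay \<tau>) (Suc n))
     = map_pmf outcome (hist m (lift_blind \<sigma>) \<tau> (Suc n))"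
  unfolding outcome_hist_lift_blind
  by (intro bind_pmf_cong refl)
    (simp add: last_recv_actions_replay length_blind_hist del: recv_actions.simps)

theorem proposition2:
  fixes m :: "'s::finite pmf" and u1 u2 :: "'s \<Rightarrow> 'b::finite \<Rightarrow> real" and \<delta> :: real
  assumes "0 < \<delta>" and "\<delta> < 1"
  shows "NE_blind_payoffs m u1 u2 \<delta> \<subseteq> NE_payoffs m u1 u2 \<delta>"
proof
  \<comment> \<open>The stage outcome laws agree for every n, so no condition on \<delta> is needed.\<close>
  fix p
  assume "p \<in> NE_blind_payoffs m u1 u2 \<delta>"
  then obtain \<sigma> \<tau> where p: "p = (disc_payoff m (lift_blind \<sigma>) \<tau> \<delta> u1, disc_payoff m (lift_blind \<sigma>) \<tau> \<delta> u2)"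
    and ne: "is_NE_blind m u1 u2 \<delta> \<sigma> \<tau>"
    unfolding NE_blind_payoffs_def by blast
  have replay_payoff: "disc_payoff m (lift_blind \<sigma>') (replay \<tau>) \<delta> f = disc_payoff m (lift_blind \<sigma>') \<tau> \<delta> f"
    for \<sigma>' f
    by (intro disc_payoff_outcome_cong outcome_hist_replay)
  have average_payoff: "disc_payoff m \<sigma>' (replay \<tau>) \<delta> f
      = disc_payoff m (lift_blind (blind_average m \<sigma>' (replay \<tau>))) (replay \<tau>) \<delta> f" for \<sigma>' f
    by (intro disc_payoff_outcome_cong outcome_hist_blind_average
        [where R = "\<lambda>as a. map_pmf last (recv_actions \<tau> (as @ [a]) (Suc (length as)))"])
      (simp only: replay_def length_map)
  have "is_NE m u1 u2 \<delta> (lift_blind \<sigma>) (replay \<tau>)"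
    unfolding is_NE_def
  proof (intro conjI allI)
    fix \<sigma>'
    show "disc_payoff m \<sigma>' (replay \<tau>) \<delta> u1 \<le> disc_payoff m (lift_blind \<sigma>) (replay \<tau>) \<delta> u1"
      using ne unfolding is_NE_blind_def average_payoff[of \<sigma>'] replay_payoff by blast
  next
    fix \<tau>'
    show "disc_payoff m (lift_blind \<sigma>) \<tau>' \<delta> u2 \<le> disc_payoff m (lift_blind \<sigma>) (replay \<tau>) \<delta> u2"
      using ne unfolding is_NE_blind_def replay_payoff by blast
  qed
  then show "p \<in> NE_payoffs m u1 u2 \<delta>"
    unfolding NE_payoffs_def p replay_payoff[symmetric] by blast
qed

end
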